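(* Let $1,2,3,4$ be four distinct vertices of $G$ such that $G[\{1,2,3,4\}]$ has edge set exactly $\{12,23,34\}$. If $\Gamma_G$ is population monotonic, then $w_{23}\ge w_{12}+w_{34}$.
   Context: $G=(V,E;w)$ is a finite simple graph with edge weights $w:E\to\mathbb{R}$, $w_e>0$ for all $e\in E$; $w_{ij}$ denotes the weight of edge $ij$. The matching game on $G$ is the cooperative game $\Gamma_G=(N,\gamma)$ with player set $N=V$ and, for $S\subseteq N$, $\gamma(S)$ equal to the maximum weight of a matching in the induced subgraph $G[S]$ (so $\gamma(\emptyset)=0$). A population monotonic allocation scheme (PMAS) is a family $(\boldsymbol{x}_S)_{\emptyset\neq S\subseteq N}$ with $\boldsymbol{x}_S=(x_{S,i})_{i\in S}\in\mathbb{R}^S$ such that (efficiency) $\sum_{i\in S}x_{S,i}=\gamma(S)$ for every nonempty $S\subseteq N$, and (monotonicity) $x_{S,i}\le x_{T,i}$ whenever $\emptyset\ne S\subseteq T\subseteq N$ and $i\in S$. $\Gamma_G$ is called population monotonic if it admits a PMAS. *)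

theory Defs
  imports Complex_Main "HOL-Library.Disjoint_Sets"
begin

definition simple_graph :: "'a set \<Rightarrow> 'a set set \<Rightarrow> bool" where
  "simple_graph V E \<longleftrightarrow> finite V \<and> (\<forall>e\<in>E. \<exists>u v. e = {u, v} \<and> u \<noteq> v \<and> u \<in> V \<and> v \<in> V)"

definition matching_in :: "'a set set \<Rightarrow> 'a set \<Rightarrow> 'a set set \<Rightarrow> bool" where
  "matching_in E S M \<longleftrightarrow> M \<subseteq> E \<and> (\<forall>e\<in>M. e \<subseteq> S) \<and> disjoint M"

definition gamma :: "'a set set \<Rightarrow> ('a set \<Rightarrow> real) \<Rightarrow> 'a set \<Rightarrow> real" where
  "gamma E w S = Max {(\<Sum>e\<in>M. w e) | M. matching_in E S M}"

text \<open>Population monotonic allocation scheme on player set N; x S i is the payoff of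
  player i in coalition S.\<close>
definition is_PMAS :: "'a set \<Rightarrow> ('a set \<Rightarrow> real) \<Rightarrow> ('a set \<Rightarrow> 'a \<Rightarrow> real) \<Rightarrow> bool" where
  "is_PMAS N v x \<longleftrightarrow>
     (\<forall>S. S \<subseteq> N \<and> S \<noteq> {} \<longrightarrow> (\<Sum>i\<in>S. x S i) = v S) \<and>
     (\<forall>S T i. S \<noteq> {} \<and> S \<subseteq> T \<and> T \<subseteq> N \<and> i \<in> S \<longrightarrow> x S i \<le> x T i)"

definition population_monotonic :: "'a set \<Rightarrow> ('a set \<Rightarrow> real) \<Rightarrow> bool" where
  "population_monotonic N v \<longleftrightarrow> (\<exists>x. is_PMAS N v x)"

end

theory Submission
  imports Defs
begin

text \<open>Let \<open>x\<close> be a PMAS and \<open>a = x\<^sub>2\<^sub>3(2)\<close>, \<open>b = x\<^sub>2\<^sub>3(3)\<close>, so \<open>a + b = w\<^sub>2\<^sub>3\<close>.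
  Efficiency on \<open>{1,2,3}\<close> together with monotonicity from \<open>{1,2}\<close> and from \<open>{2,3}\<close> gives
  \<open>w\<^sub>1\<^sub>2 + b \<le> \<gamma>({1,2,3}) \<le> max w\<^sub>1\<^sub>2 w\<^sub>2\<^sub>3\<close>, and symmetrically
  \<open>w\<^sub>3\<^sub>4 + a \<le> max w\<^sub>2\<^sub>3 w\<^sub>3\<^sub>4\<close>. If \<open>w\<^sub>1\<^sub>2 \<ge> w\<^sub>2\<^sub>3\<close> the first bound forces \<open>b \<le> 0\<close>, hence
  \<open>a \<ge> w\<^sub>2\<^sub>3\<close>, which contradicts the second bound since all weights are positive; so
  \<open>w\<^sub>1\<^sub>2 < w\<^sub>2\<^sub>3\<close>, likewise \<open>w\<^sub>3\<^sub>4 < w\<^sub>2\<^sub>3\<close>, and adding the two bounds gives the claim.\<close>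

lemma PMAS_efficient:
  assumes "is_PMAS N v x" "S \<subseteq> N" "S \<noteq> {}"
  shows "(\<Sum>i\<in>S. x S i) = v S"
  using assms unfolding is_PMAS_def by blast

lemma PMAS_monotone:
  assumes "is_PMAS N v x" "S \<noteq> {}" "S \<subseteq> T" "T \<subseteq> N" "i \<in> S"
  shows "x S i \<le> x T i"
  using assms unfolding is_PMAS_def by blast

lemma PMAS_pair_share_le:
  assumes "is_PMAS N v x" "i \<in> N" "j \<in> N" "k \<in> N" "distinct [i, j, k]"
  shows "x {j, k} k \<le> v {i, j, k} - v {i, j}"
proof -
  note eff = PMAS_efficient[OF assms(1)]
  have mono: "x S l \<le> x {i, j, k} l" if "S \<subseteq> {i, j, k}" "l \<in> S" for S l
    using that assms(2-4) by (intro PMAS_monotone[OF assms(1)]) auto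
  have "v {i, j} = x {i, j} i + x {i, j} j"
    using eff[of "{i, j}"] assms(2-5) by simp
  also have "\<dots> \<le> x {i, j, k} i + x {i, j, k} j"
    using mono[of "{i, j}"] by (intro add_mono) auto
  also have "\<dots> = v {i, j, k} - x {i, j, k} k"
    using eff[of "{i, j, k}"] assms(2-5) by simp
  also have "\<dots> \<le> v {i, j, k} - x {j, k} k"
    using mono[of "{j, k}" k] by simp
  finally show ?thesis by simp
qed

lemma simple_graph_finite_edges:
  assumes "simple_graph V E"
  shows "finite E"
proof -
  have "E \<subseteq> Pow V"
    using assms unfolding simple_graph_def by force
  thus ?thesis
    using assms unfolding simple_graph_def by (meson finite_Pow_iff finite_subset)
qed

lemma finite_matching_weights:
  assumes "finite E"
  shows "finite {(\<Sum>e\<in>M. w e) | M. matching_in E S M}"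
proof -
  have "{M. matching_in E S M} \<subseteq> Pow E"
    by (auto simp: matching_in_def)
  hence "finite {M. matching_in E S M}"
    using assms by (meson finite_Pow_iff rev_finite_subset)
  thus ?thesis by (simp add: setcompr_eq_image)
qed

lemma gamma_ge_edge:
  assumes "finite E" "e \<in> E" "e \<subseteq> S"
  shows "w e \<le> gamma E w S"
proof -
  have "matching_in E S {e}"
    using assms unfolding matching_in_def disjoint_def by blast
  hence "w e \<in> {(\<Sum>e\<in>M. w e) | M. matching_in E S M}"
    by force
  thus ?thesis
    unfolding gamma_def using finite_matching_weights[OF assms(1)] by (rule Max_ge[rotated])
qed

text \<open>If all edges of \<open>G[S]\<close> share the vertex \<open>u\<close>, a matching in \<open>G[S]\<close> has at most one edge.\<close>
lemma gamma_star_le: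
  assumes "finite E" "0 \<le> b"
    and star: "\<And>e. e \<in> E \<Longrightarrow> e \<subseteq> S \<Longrightarrow> u \<in> e"
    and bound: "\<And>e. e \<in> E \<Longrightarrow> e \<subseteq> S \<Longrightarrow> w e \<le> b"
  shows "gamma E w S \<le> b"
proof -
  have "(\<Sum>e\<in>M. w e) \<le> b" if M: "matching_in E S M" for M
  proof (cases "M = {}")
    case False
    then obtain e where e: "e \<in> M" by blast
    have "M = {e}"
    proof (rule ccontr)
      assume "M \<noteq> {e}"
      then obtain e' where "e' \<in> M" "e' \<noteq> e" using e by blast
      hence "e \<inter> e' = {}"
        using M e unfolding matching_in_def by (auto dest: disjointD)
      moreover have "u \<in> e" "u \<in> e'"
        using M e \<open>e' \<in> M\<close> star unfolding matching_in_def by auto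
      ultimately show False by blast
    qed
    thus ?thesis
      using M e bound unfolding matching_in_def by auto
  qed (use assms(2) in simp)
  moreover have "matching_in E S {}"
    by (simp add: matching_in_def)
  ultimately show ?thesis
    unfolding gamma_def using finite_matching_weights[OF assms(1)]
    by (subst Max_le_iff) auto
qed

lemma PMAS_matching_path_share_le:
  assumes x: "is_PMAS V (gamma E w) x" and fin: "finite E"
    and "a \<in> V" "b \<in> V" "c \<in> V" "distinct [a, b, c]"
    and ab: "{a, b} \<in> E" "0 \<le> w {a, b}"
    and path: "\<And>e. e \<in> E \<Longrightarrow> e \<subseteq> {a, b, c} \<Longrightarrow> e = {a, b} \<or> e = {b, c}"
  shows "x {b, c} c \<le> max (w {a, b}) (w {b, c}) - w {a, b}"
proof -
  have "gamma E w {a, b, c} \<le> max (w {a, b}) (w {b, c})"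
  proof (rule gamma_star_le[OF fin, where u = b])
    show "b \<in> e" "w e \<le> max (w {a, b}) (w {b, c})"
      if "e \<in> E" "e \<subseteq> {a, b, c}" for e
      using path[OF that] by auto
  qed (use ab in auto)
  moreover have "w {a, b} \<le> gamma E w {a, b}"
    using gamma_ge_edge[OF fin ab(1)] by simp
  ultimately show ?thesis
    using PMAS_pair_share_le[OF x assms(3-6)] by linarith
qed

lemma split_bounds_force_heavy_middle:
  fixes a b c s t :: real
  assumes "0 < a" "0 < b" "0 < c" "b \<le> s + t"
    and "t \<le> max a b - a" "s \<le> max c b - c"
  shows "a + c \<le> b"
proof -
  have sum: "a + b + c \<le> max a b + max c b"
    using assms(4-6) by linarith
  have "max a b < a + b" "max c b < b + c"
    using assms(1-3) by (simp_all add: max_less_iff_conj)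
  hence "max a b = b" "max c b = b"
    using sum by (simp_all add: max_def split: if_splits)
  thus ?thesis
    using sum by linarith
qed

theorem mainTheorem5:
  fixes V :: "'a set" and E :: "'a set set" and w :: "'a set \<Rightarrow> real"
    and v1 v2 v3 v4 :: 'a
  assumes "simple_graph V E"
    and "\<forall>e\<in>E. w e > 0"
    and "v1 \<in> V" "v2 \<in> V" "v3 \<in> V" "v4 \<in> V"
    and "distinct [v1, v2, v3, v4]"
    and "{e \<in> E. e \<subseteq> {v1, v2, v3, v4}} = {{v1, v2}, {v2, v3}, {v3, v4}}"
    and "population_monotonic V (gamma E w)"
  shows "w {v2, v3} \<ge> w {v1, v2} + w {v3, v4}"
proof -
  note distinct = assms(7) and induced = assms(8)
  have fin: "finite E"
    using assms(1) by (rule simple_graph_finite_edges)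
  obtain x where x: "is_PMAS V (gamma E w) x"
    using assms(9) unfolding population_monotonic_def by blast
  have edges: "{v1, v2} \<in> E" "{v2, v3} \<in> E" "{v4, v3} \<in> E"
    using induced insert_commute[of v4 v3 "{}"] by blast+
  hence pos: "w {v1, v2} > 0" "w {v2, v3} > 0" "w {v4, v3} > 0"
    using assms(2) by auto
  have path_edges: "e \<in> {{v1, v2}, {v2, v3}, {v3, v4}}" if "e \<in> E" "e \<subseteq> {v1, v2, v3, v4}" for e
    using that induced by blast
  have "x {v2, v3} v3 \<le> max (w {v1, v2}) (w {v2, v3}) - w {v1, v2}"
  proof (rule PMAS_matching_path_share_le[OF x fin assms(3-5) _ edges(1)])
    show "e = {v1, v2} \<or> e = {v2, v3}" if "e \<in> E" "e \<subseteq> {v1, v2, v3}" for e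
      using path_edges[of e] that distinct by auto
  qed (use distinct pos in auto)
  moreover have "x {v3, v2} v2 \<le> max (w {v4, v3}) (w {v3, v2}) - w {v4, v3}"
  proof (rule PMAS_matching_path_share_le[OF x fin assms(6,5,4) _ edges(3)])
    show "e = {v4, v3} \<or> e = {v3, v2}" if "e \<in> E" "e \<subseteq> {v4, v3, v2}" for e
      using path_edges[of e] that distinct by auto
  qed (use distinct pos in auto)
  moreover have "w {v2, v3} \<le> x {v2, v3} v2 + x {v2, v3} v3"
    using gamma_ge_edge[OF fin edges(2), of "{v2, v3}"] PMAS_efficient[OF x, of "{v2, v3}"]
      assms(4,5) distinct by simp
  moreover have "{v3, v2} = {v2, v3}" "{v4, v3} = {v3, v4}"
    by blast+
  ultimately show ?thesis
    using split_bounds_force_heavy_middle pos by simp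
qed

end
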